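(* Fix $a>0$. Then there exist, for all sufficiently large real $c>0$, complex numbers $z^*_c$ satisfying ${}_1F_1(a;c;z^*_c)=0$ and $\lim_{c\to\infty} z^*_c/c = 1$.
   Context: ${}_1F_1(a;c;z)=\sum_{k=0}^\infty \frac{(a)_k}{(c)_k}\frac{z^k}{k!}$ denotes Kummer's confluent hypergeometric function (an entire function of $z$ for $c>0$), where $(x)_k=\Gamma(x+k)/\Gamma(x)$ is the Pochhammer symbol. *)

theory Defs
  imports "HOL-Analysis.Analysis"
begin

text \<open>Kummer's confluent hypergeometric function 1F1(a;c;z) as its power series
  (real parameters a, c; complex argument z). For c > 0 the series converges for all z.\<close>
definition hyp1F1 :: "real \<Rightarrow> real \<Rightarrow> complex \<Rightarrow> complex" where
  "hyp1F1 a c z =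
     (\<Sum>k. pochhammer (complex_of_real a) k / pochhammer (complex_of_real c) k
            * z ^ k / fact k)"

end

theory Submission
  imports Defs "HOL-Complex_Analysis.Complex_Analysis" "HOL-Real_Asymp.Real_Asymp"
begin

(* Put F_c(w) = 1F1(a;c;cw). On the real axis F_c is a series of positive terms: for 0 <= w < 1
   it stays below (1 - w) powr (-a) as c -> oo, while for w > 1 it grows like exp (delta c).
   Suppose F_c had no zero in the disc |w - 1| < eps along a sequence c_n -> oo. Then
   f_n = (log F_(c_n)) / c_n, with the branch that is real on the real axis, is holomorphic on
   the disc, satisfies Re f_n(w) <= |w| because |1F1(a;c;z)| <= exp |z|, and tends to 0 on a
   segment left of 1. By Montel's theorem a subsequence of exp f_n converges; its limit is 1 on
   that segment, hence everywhere by the identity theorem, contradicting Re f_n(1 + eps/2) >= delta.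
   So for large c there are zeros z with |z/c - 1| < eps, and choosing them nearly optimally
   gives z_c / c -> 1. *)

section \<open>The series on the real axis\<close>

definition hyp1F1_real :: "real \<Rightarrow> real \<Rightarrow> real \<Rightarrow> real" where
  "hyp1F1_real a c x = (\<Sum>k. pochhammer a k / pochhammer c k * x ^ k / fact k)"

lemma pochhammer_mono:
  fixes a c :: real
  assumes "0 \<le> a" "a \<le> c"
  shows "pochhammer a k \<le> pochhammer c k"
  unfolding pochhammer_prod using assms by (intro prod_mono) auto

lemma power_le_pochhammer:
  fixes c :: real
  assumes "0 \<le> c"
  shows "c ^ k \<le> pochhammer c k"
proof -
  have "c ^ k = (\<Prod>i<k. c)" by simp
  also have "\<dots> \<le> (\<Prod>i<k. c + of_nat i)" using assms by (intro prod_mono) auto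
  finally show ?thesis by (simp add: pochhammer_prod atLeast0LessThan)
qed

lemma pochhammer_le_power:
  fixes c :: real
  assumes "0 \<le> c"
  shows "pochhammer c k \<le> (c + of_nat k) ^ k"
proof -
  have "pochhammer c k = (\<Prod>i<k. c + of_nat i)" by (simp add: pochhammer_prod atLeast0LessThan)
  also have "\<dots> \<le> (\<Prod>i<k. c + of_nat k)" using assms by (intro prod_mono) auto
  finally show ?thesis by simp
qed

lemma hyp1F1_real_term_nonneg:
  fixes a c y :: real
  assumes "0 < a" "a \<le> c" "0 \<le> y"
  shows "0 \<le> pochhammer a k / pochhammer c k * y ^ k / fact k"
  using assms pochhammer_pos[of a k] pochhammer_pos[of c k] by simp

lemma hyp1F1_real_term_le_exp_term:
  fixes a c y :: real
  assumes "0 < a" "a \<le> c" "0 \<le> y"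
  shows "pochhammer a k / pochhammer c k * y ^ k / fact k \<le> y ^ k / fact k"
proof -
  have "pochhammer a k / pochhammer c k \<le> 1"
    using assms pochhammer_mono[of a c k] pochhammer_pos[of c k] by simp
  then show ?thesis
    using assms pochhammer_pos[of a k] pochhammer_pos[of c k]
    by (intro divide_right_mono mult_left_le_one_le) auto
qed

lemma norm_hyp1F1_term:
  fixes a c :: real and z :: complex
  assumes "0 < a" "a \<le> c"
  shows "norm (pochhammer (of_real a) k / pochhammer (of_real c) k * z ^ k / fact k)
       = pochhammer a k / pochhammer c k * norm z ^ k / fact k"
  using assms pochhammer_pos[of a k] pochhammer_pos[of c k]
  by (simp add: pochhammer_of_real norm_mult norm_divide norm_power del: of_real_divide)

lemma summable_hyp1F1_real_term:
  fixes a c y :: real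
  assumes "0 < a" "a \<le> c" "0 \<le> y"
  shows "summable (\<lambda>k. pochhammer a k / pochhammer c k * y ^ k / fact k)"
proof (rule summable_comparison_test[OF _ summable_exp_generic[of y]])
  show "\<exists>N. \<forall>k\<ge>N. norm (pochhammer a k / pochhammer c k * y ^ k / fact k) \<le> y ^ k /\<^sub>R fact k"
    using hyp1F1_real_term_nonneg[OF assms] hyp1F1_real_term_le_exp_term[OF assms]
    by (simp add: divide_inverse_commute)
qed

lemma summable_norm_hyp1F1_term:
  fixes a c :: real and z :: complex
  assumes "0 < a" "a \<le> c"
  shows "summable (\<lambda>k. norm (pochhammer (of_real a) k / pochhammer (of_real c) k * z ^ k / fact k))"
  unfolding norm_hyp1F1_term[OF assms] by (rule summable_hyp1F1_real_term[OF assms norm_ge_zero])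

lemma hyp1F1_of_real:
  fixes a c x :: real
  assumes "0 < a" "a \<le> c"
  shows "hyp1F1 a c (of_real x) = of_real (hyp1F1_real a c x)"
proof -
  have "norm (pochhammer a k / pochhammer c k * x ^ k / fact k)
      = pochhammer a k / pochhammer c k * \<bar>x\<bar> ^ k / fact k" for k
    using assms pochhammer_pos[of a k] pochhammer_pos[of c k] by (simp add: abs_mult power_abs)
  then have summable: "summable (\<lambda>k. norm (pochhammer a k / pochhammer c k * x ^ k / fact k))"
    using summable_hyp1F1_real_term[OF assms abs_ge_zero] by simp
  have "hyp1F1 a c (of_real x) = (\<Sum>k. of_real (pochhammer a k / pochhammer c k * x ^ k / fact k))"
    unfolding hyp1F1_def by (simp add: pochhammer_of_real)
  also have "\<dots> = of_real (hyp1F1_real a c x)"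
    unfolding hyp1F1_real_def
    by (rule suminf_of_real[OF summable_norm_cancel[OF summable], symmetric])
  finally show ?thesis .
qed

lemma norm_hyp1F1_le:
  fixes a c :: real
  assumes "0 < a" "a \<le> c"
  shows "norm (hyp1F1 a c z) \<le> hyp1F1_real a c (norm z)"
  unfolding hyp1F1_def hyp1F1_real_def norm_hyp1F1_term[OF assms, symmetric]
  by (rule summable_norm[OF summable_norm_hyp1F1_term[OF assms]])

lemma hyp1F1_real_le_exp:
  fixes a c y :: real
  assumes "0 < a" "a \<le> c" "0 \<le> y"
  shows "hyp1F1_real a c y \<le> exp y"
proof -
  have "hyp1F1_real a c y \<le> (\<Sum>k. y ^ k /\<^sub>R fact k)"
    unfolding hyp1F1_real_def
    using hyp1F1_real_term_le_exp_term[OF assms]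
    by (intro suminf_le summable_hyp1F1_real_term[OF assms] summable_exp_generic)
       (simp add: divide_inverse_commute)
  then show ?thesis by (simp add: exp_def)
qed

lemma holomorphic_hyp1F1 [holomorphic_intros]:
  fixes a c :: real
  assumes "0 < a" "a \<le> c" "g holomorphic_on S"
  shows "(\<lambda>w. hyp1F1 a c (g w)) holomorphic_on S"
proof -
  define coeff :: "nat \<Rightarrow> complex"
    where "coeff k = pochhammer (of_real a) k / pochhammer (of_real c) k / fact k" for k
  have "hyp1F1 a c = (\<lambda>z. \<Sum>k. coeff k * z ^ k)"
    by (auto simp: hyp1F1_def coeff_def fun_eq_iff)
  moreover have "summable (\<lambda>k. coeff k * z ^ k)" for z
    using summable_norm_cancel[OF summable_norm_hyp1F1_term[OF assms(1,2), of z]]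
    by (simp add: coeff_def)
  ultimately have "hyp1F1 a c holomorphic_on UNIV"
    unfolding holomorphic_on_def using termdiffs_strong_converges_everywhere
    by (metis field_differentiable_at_within field_differentiable_def)
  from holomorphic_on_compose[OF assms(3) holomorphic_on_subset[OF this]] show ?thesis
    by (simp add: o_def)
qed

lemma hyp1F1_real_ge_term:
  fixes a c y :: real
  assumes "0 < a" "a \<le> c" "0 \<le> y"
  shows "pochhammer a k / pochhammer c k * y ^ k / fact k \<le> hyp1F1_real a c y"
  unfolding hyp1F1_real_def
  using sum_le_suminf[OF summable_hyp1F1_real_term[OF assms], of "{k}"]
    hyp1F1_real_term_nonneg[OF assms] by simp

lemma hyp1F1_real_ge_1:
  fixes a c y :: real
  assumes "0 < a" "a \<le> c" "0 \<le> y"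
  shows "1 \<le> hyp1F1_real a c y"
  using hyp1F1_real_ge_term[OF assms, of 0] by simp

lemma pochhammer_binomial_series:
  fixes a x :: real
  assumes "\<bar>x\<bar> < 1"
  shows "(\<lambda>k. pochhammer a k * x ^ k / fact k) sums (1 - x) powr (- a)"
proof -
  have "((- a) gchoose k) * (- x) ^ k = pochhammer a k * x ^ k / fact k" for k
    by (simp add: gbinomial_pochhammer power_mult_distrib[symmetric])
  then show ?thesis
    using gen_binomial_real[of "- x" "- a"] assms by simp
qed

lemma hyp1F1_real_scaled_le:
  fixes a c x :: real
  assumes "0 < a" "a \<le> c" "0 \<le> x" "x < 1"
  shows "hyp1F1_real a c (c * x) \<le> (1 - x) powr (- a)"
  unfolding hyp1F1_real_def
proof (rule sums_le[OF _ summable_sums pochhammer_binomial_series])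
  fix k
  have "c ^ k * x ^ k \<le> pochhammer c k * x ^ k"
    using assms power_le_pochhammer[of c k] by (intro mult_right_mono) auto
  then have "(c * x) ^ k / pochhammer c k \<le> x ^ k"
    using assms pochhammer_pos[of c k] by (simp add: power_mult_distrib divide_le_eq mult.commute)
  then show "pochhammer a k / pochhammer c k * (c * x) ^ k / fact k
      \<le> pochhammer a k * x ^ k / fact k"
    using assms pochhammer_pos[of a k]
    by (intro divide_right_mono)
      (auto simp: mult_left_mono times_divide_eq_right[symmetric] simp del: times_divide_eq_right)
qed (use assms summable_hyp1F1_real_term[of a c "c * x"] in auto)

lemma hyp1F1_real_ge_power:
  fixes a c y :: real
  assumes "0 < a" "a \<le> c" "0 \<le> y" "1 \<le> K"
  shows "a / K * (y / (c + K)) ^ K \<le> hyp1F1_real a c y"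
proof -
  obtain m where m: "K = Suc m" using assms(4) by (cases K) auto
  have "a * fact m \<le> pochhammer a K"
    using pochhammer_mono[of 1 "a + 1" m] assms by (simp add: m pochhammer_rec pochhammer_fact)
  moreover have "pochhammer c K \<le> (c + K) ^ K"
    using assms by (intro pochhammer_le_power) auto
  moreover have "0 < pochhammer c K" using assms by (intro pochhammer_pos) auto
  ultimately have "a * fact m / fact K * (y ^ K / (c + K) ^ K)
      \<le> pochhammer a K / fact K * (y ^ K / pochhammer c K)"
    using assms pochhammer_pos[of a K] by (intro mult_mono divide_right_mono divide_left_mono) auto
  also have "\<dots> \<le> hyp1F1_real a c y"
    using hyp1F1_real_ge_term[OF assms(1-3), of K] by (simp add: ac_simps)
  finally show ?thesis
    by (simp add: m power_divide)
qed

lemma hyp1F1_real_scaled_exp_growth: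
  fixes a s :: real
  assumes "0 < a" "1 < s"
  shows "\<exists>\<delta>>0. \<forall>\<^sub>F c in at_top. exp (\<delta> * c) \<le> hyp1F1_real a c (c * s)"
proof -
  \<comment> \<open>Already the term of index \<open>K = \<lfloor>t c\<rfloor>\<close> is at least \<open>a / K * q ^ K\<close> with \<open>q > 1\<close>.\<close>
  define t where "t = (s - 1) / 2"
  define q where "q = s / (1 + t)"
  define L where "L = ln q"
  have t: "0 < t" and q: "1 < q" and L: "0 < L"
    using assms by (simp_all add: t_def q_def L_def field_simps)
  have "\<forall>\<^sub>F c in at_top. t * L / 2 * c \<le> ln a - ln (t * c) + (t * c - 1) * L"
    using assms t L by real_asymp
  moreover have "\<forall>\<^sub>F c in at_top. max a (1 / t) \<le> c" by (rule eventually_ge_at_top)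
  ultimately have "\<forall>\<^sub>F c in at_top. exp (t * L / 2 * c) \<le> hyp1F1_real a c (c * s)"
  proof eventually_elim
    case (elim c)
    then have "a \<le> c" "1 \<le> t * c" using t by (auto simp: field_simps)
    define K where "K = nat \<lfloor>t * c\<rfloor>"
    have K: "real K \<le> t * c" "t * c - 1 \<le> real K" "1 \<le> K"
      using \<open>1 \<le> t * c\<close> unfolding K_def by linarith+
    have "ln K \<le> ln (t * c)" "(t * c - 1) * L \<le> K * L"
      using K L by (auto intro: mult_right_mono)
    then have "exp (t * L / 2 * c) \<le> exp (ln a - ln K + K * L)"
      using elim(1) by simp
    also have "\<dots> = a / K * q ^ K"
      using assms K q by (simp add: exp_diff exp_add exp_of_nat_mult L_def)
    also have "\<dots> \<le> a / K * ((c * s) / (c + K)) ^ K"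
    proof -
      have "q \<le> (c * s) / (c + K)"
        using K t assms \<open>a \<le> c\<close> by (simp add: q_def field_simps mult_left_mono)
      then show ?thesis using assms q by (intro mult_left_mono power_mono) auto
    qed
    also have "\<dots> \<le> hyp1F1_real a c (c * s)"
      using assms \<open>a \<le> c\<close> K by (intro hyp1F1_real_ge_power) auto
    finally show ?case .
  qed
  then show ?thesis using t L by (intro exI[of _ "t * L / 2"]) auto
qed

section \<open>Holomorphic logarithms and normal families\<close>

lemma exp_eq_1_imp_constant_on:
  fixes \<phi> :: "'a::topological_space \<Rightarrow> complex"
  assumes "connected S" "continuous_on S \<phi>" "\<And>x. x \<in> S \<Longrightarrow> exp (\<phi> x) = 1"
  shows "\<phi> constant_on S"
proof (rule continuous_discrete_range_constant[OF assms(1,2)])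
  fix x assume x: "x \<in> S"
  show "\<exists>e>0. \<forall>y. y \<in> S \<and> \<phi> y \<noteq> \<phi> x \<longrightarrow> e \<le> norm (\<phi> y - \<phi> x)"
  proof (intro exI[of _ "2 * pi"] conjI allI impI)
    fix y assume y: "y \<in> S \<and> \<phi> y \<noteq> \<phi> x"
    then have "exp (\<phi> y - \<phi> x) = 1" using assms(3) x by (simp add: exp_diff)
    then obtain k :: int where k: "Re (\<phi> y - \<phi> x) = 0" "Im (\<phi> y - \<phi> x) = of_int (2 * k) * pi"
      by (auto simp: exp_eq_1)
    with y have "k \<noteq> 0" by (auto simp: complex_eq_iff)
    then have "1 \<le> \<bar>real_of_int k\<bar>" by linarith
    then have "2 * pi \<le> \<bar>Im (\<phi> y - \<phi> x)\<bar>" using k pi_gt_zero by (simp add: abs_mult)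
    then show "2 * pi \<le> norm (\<phi> y - \<phi> x)" using abs_Im_le_cmod by (rule order_trans)
  qed simp
qed

lemma holomorphic_log_extending_ln:
  fixes F :: "complex \<Rightarrow> complex" and R :: "real \<Rightarrow> real"
  assumes holF: "F holomorphic_on \<Omega>" and "convex \<Omega>" and nz: "\<And>w. w \<in> \<Omega> \<Longrightarrow> F w \<noteq> 0"
    and "connected J" and J: "of_real ` J \<subseteq> \<Omega>"
    and FR: "\<And>r. r \<in> J \<Longrightarrow> F (of_real r) = of_real (R r)" and R: "\<And>r. r \<in> J \<Longrightarrow> 0 < R r"
  obtains G where "G holomorphic_on \<Omega>" "\<And>w. w \<in> \<Omega> \<Longrightarrow> F w = exp (G w)"
    "\<And>r. r \<in> J \<Longrightarrow> G (of_real r) = of_real (ln (R r))"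
proof -
  obtain g where holg: "g holomorphic_on \<Omega>" and g: "\<And>w. w \<in> \<Omega> \<Longrightarrow> F w = exp (g w)"
    using contractible_imp_holomorphic_log[OF holF convex_imp_contractible nz] \<open>convex \<Omega>\<close> by blast
  define \<phi> where "\<phi> r = g (of_real r) - of_real (ln (R r))" for r
  have exp_\<phi>: "exp (\<phi> r) = 1" if "r \<in> J" for r
  proof -
    have "exp (of_real (ln (R r))) = F (of_real r)"
      using FR[OF that] R[OF that] by (simp add: exp_of_real)
    moreover have "F (of_real r) = exp (g (of_real r))" "F (of_real r) \<noteq> 0"
      using g nz J that by auto
    ultimately show ?thesis by (simp add: \<phi>_def exp_diff)
  qed
  have "continuous_on J (\<lambda>r. g (of_real r))"
    using J by (intro continuous_on_compose2[OF holomorphic_on_imp_continuous_on[OF holg]]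
        continuous_intros) auto
  moreover have "continuous_on J (\<lambda>r. ln (Re (F (of_real r))))"
    using J
    by (intro continuous_intros continuous_on_compose2[OF holomorphic_on_imp_continuous_on[OF holF]])
      (auto simp: FR dest: R)
  then have "continuous_on J (\<lambda>r. ln (R r))"
    by (rule continuous_on_eq) (simp add: FR)
  ultimately have "continuous_on J \<phi>"
    unfolding \<phi>_def by (intro continuous_on_diff continuous_on_of_real)
  then have "\<phi> constant_on J"
    using exp_\<phi> \<open>connected J\<close> by (intro exp_eq_1_imp_constant_on)
  obtain \<kappa> where \<kappa>: "exp \<kappa> = 1" "\<And>r. r \<in> J \<Longrightarrow> \<phi> r = \<kappa>"
  proof (cases "J = {}")
    case False
    then obtain r0 where "r0 \<in> J" by blast
    from \<open>\<phi> constant_on J\<close> obtain \<kappa> where \<kappa>: "\<And>r. r \<in> J \<Longrightarrow> \<phi> r = \<kappa>"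
      unfolding constant_on_def by blast
    moreover have "exp \<kappa> = 1" using exp_\<phi>[OF \<open>r0 \<in> J\<close>] \<kappa>[OF \<open>r0 \<in> J\<close>] by simp
    ultimately show thesis using that by blast
  qed (use that[of 0] in simp)
  show thesis
  proof
    show "(\<lambda>w. g w - \<kappa>) holomorphic_on \<Omega>" by (intro holomorphic_intros holg)
    show "F w = exp (g w - \<kappa>)" if "w \<in> \<Omega>" for w
      using g[OF that] \<kappa>(1) by (simp add: exp_diff)
    show "g (of_real r) - \<kappa> = of_real (ln (R r))" if "r \<in> J" for r
      using \<kappa>(2)[OF that] by (auto simp: \<phi>_def)
  qed
qed

lemma Re_bounded_holomorphic_family_not_uniformly_positive:
  fixes f :: "nat \<Rightarrow> complex \<Rightarrow> complex"
  assumes "open \<Omega>" "connected \<Omega>" and holf: "\<And>n. f n holomorphic_on \<Omega>"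
    and bounded: "\<And>n w. w \<in> \<Omega> \<Longrightarrow> Re (f n w) \<le> M"
    and "S \<subseteq> \<Omega>" "s \<in> \<Omega>" "s islimpt S"
    and lim0: "\<And>w. w \<in> S \<Longrightarrow> (\<lambda>n. f n w) \<longlonglongrightarrow> 0"
    and "p \<in> \<Omega>" "0 < \<delta>"
  shows "\<not> (\<forall>n. \<delta> \<le> Re (f n p))"
proof
  assume ge: "\<forall>n. \<delta> \<le> Re (f n p)"
  define H where "H n w = exp (f n w)" for n w
  obtain h r where holh: "h holomorphic_on \<Omega>" and r: "strict_mono r"
    and lim: "\<And>w. w \<in> \<Omega> \<Longrightarrow> (\<lambda>n. H (r n) w) \<longlonglongrightarrow> h w"
  proof (rule Montel[of \<Omega> "range H" H])
    show "open \<Omega>" by fact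
    show "g holomorphic_on \<Omega>" if "g \<in> range H" for g
      using that holf unfolding H_def by (auto intro!: holomorphic_intros)
    show "\<exists>B. \<forall>g\<in>range H. \<forall>w\<in>K. norm (g w) \<le> B" if "compact K" "K \<subseteq> \<Omega>" for K
      using bounded that(2) by (intro exI[of _ "exp M"]) (auto simp: H_def)
  qed auto
  have h1: "h w - 1 = 0" if "w \<in> S" for w
  proof -
    have "(\<lambda>n. H n w) \<longlonglongrightarrow> exp 0"
      unfolding H_def by (intro tendsto_exp lim0 that)
    then have "(\<lambda>n. H (r n) w) \<longlonglongrightarrow> 1"
      using LIMSEQ_subseq_LIMSEQ[OF _ r] by (simp add: o_def)
    moreover have "(\<lambda>n. H (r n) w) \<longlonglongrightarrow> h w"
      using that \<open>S \<subseteq> \<Omega>\<close> by (intro lim) blast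
    ultimately show ?thesis using LIMSEQ_unique by fastforce
  qed
  have "h p - 1 = 0"
  proof (rule analytic_continuation[of "\<lambda>w. h w - 1" \<Omega> S s])
    show "(\<lambda>w. h w - 1) holomorphic_on \<Omega>" by (intro holomorphic_intros holh)
  qed (fact h1 assms)+
  moreover have "exp \<delta> \<le> norm (h p)"
  proof (rule LIMSEQ_le_const[OF tendsto_norm[OF lim[OF \<open>p \<in> \<Omega>\<close>]]])
    show "\<exists>N. \<forall>n\<ge>N. exp \<delta> \<le> norm (H (r n) p)"
      using ge by (intro exI[of _ 0]) (auto simp: H_def)
  qed
  ultimately show False using \<open>0 < \<delta>\<close> by simp
qed

lemma frequently_at_top_imp_sequence:
  fixes P :: "real \<Rightarrow> bool"
  assumes "\<exists>\<^sub>F x in at_top. P x"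
  obtains s :: "nat \<Rightarrow> real" where "filterlim s at_top sequentially" "\<And>n. P (s n)"
proof -
  have "\<not> (\<exists>N. \<forall>x\<ge>N. \<not> P x)"
    using assms by (simp add: frequently_def eventually_at_top_linorder)
  then have "\<exists>x\<ge>real n. P x" for n by blast
  then obtain s where s: "\<And>n. real n \<le> s n" "\<And>n. P (s n)" by metis
  have "filterlim s at_top sequentially"
    by (rule filterlim_at_top_mono[OF filterlim_real_sequentially]) (use s in auto)
  with s show thesis using that by blast
qed

lemma tendsto_choice_at_top:
  fixes f :: "real \<Rightarrow> 'a \<Rightarrow> 'b::metric_space"
  assumes "\<And>\<epsilon>. 0 < \<epsilon> \<Longrightarrow> \<forall>\<^sub>F x in at_top. \<exists>y. P x y \<and> dist (f x y) L < \<epsilon>"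
  shows "\<exists>g. (\<forall>\<^sub>F x in at_top. P x (g x)) \<and> ((\<lambda>x. f x (g x)) \<longlongrightarrow> L) at_top"
proof -
  define D where "D x = (\<lambda>y. dist (f x y) L) ` {y. P x y}" for x
  \<comment> \<open>\<open>Inf (D x)\<close> need not be attained; the slack \<open>1 / x\<close> vanishes at infinity.\<close>
  define g where "g x = (SOME y. P x y \<and> dist (f x y) L < Inf (D x) + 1 / x)" for x
  have bdd: "bdd_below (D x)" for x
    unfolding D_def by (auto intro: bdd_belowI[of _ 0])
  have g: "P x (g x) \<and> dist (f x (g x)) L < Inf (D x) + 1 / x" if "P x y" "0 < x" for x y
  proof -
    have "\<exists>y. P x y \<and> dist (f x y) L < Inf (D x) + 1 / x"
      using that cInf_less_iff[OF _ bdd, of x "Inf (D x) + 1 / x"] by (auto simp: D_def)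
    then show ?thesis unfolding g_def by (rule someI_ex)
  qed
  have Inf_le: "Inf (D x) \<le> dist (f x y) L" if "P x y" for x y
    using that bdd by (auto simp: D_def intro: cInf_lower)
  have "\<forall>\<^sub>F x in at_top. P x (g x)"
    using assms[OF zero_less_one] eventually_gt_at_top[of 0]
    by eventually_elim (use g in blast)
  moreover have "((\<lambda>x. f x (g x)) \<longlongrightarrow> L) at_top"
  proof (rule tendstoI)
    fix \<epsilon> :: real assume "0 < \<epsilon>"
    have "\<forall>\<^sub>F x in at_top. 1 / x < \<epsilon> / 2"
      using \<open>0 < \<epsilon>\<close> by real_asymp
    moreover have "\<forall>\<^sub>F x in at_top. \<exists>y. P x y \<and> dist (f x y) L < \<epsilon> / 2"
      using \<open>0 < \<epsilon>\<close> by (intro assms) simp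
    ultimately show "\<forall>\<^sub>F x in at_top. dist (f x (g x)) L < \<epsilon>"
      using eventually_gt_at_top[of 0]
    proof eventually_elim
      case (elim x)
      then obtain y where "P x y" "dist (f x y) L < \<epsilon> / 2" by auto
      with g[of x y] Inf_le[of x y] elim show ?case by linarith
    qed
  qed
  ultimately show ?thesis by blast
qed

section \<open>Zeros of the scaled function near w = 1\<close>

lemma hyp1F1_real_scaled_subexponential:
  fixes a r :: real
  assumes "0 < a" "0 \<le> r" "r < 1"
  shows "((\<lambda>c. ln (hyp1F1_real a c (c * r)) / c) \<longlongrightarrow> 0) at_top"
proof (rule real_tendsto_sandwich[of "\<lambda>_. 0" _ _ "\<lambda>c. ln ((1 - r) powr (- a)) / c"])
  show "\<forall>\<^sub>F c in at_top. 0 \<le> ln (hyp1F1_real a c (c * r)) / c"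
    using eventually_ge_at_top[of a]
    by eventually_elim (use assms hyp1F1_real_ge_1 in \<open>auto intro!: divide_nonneg_pos\<close>)
  show "\<forall>\<^sub>F c in at_top. ln (hyp1F1_real a c (c * r)) / c \<le> ln ((1 - r) powr (- a)) / c"
    using eventually_ge_at_top[of a]
  proof eventually_elim
    case (elim c)
    have "1 \<le> hyp1F1_real a c (c * r)" "hyp1F1_real a c (c * r) \<le> (1 - r) powr (- a)"
      using assms elim by (auto intro!: hyp1F1_real_ge_1 hyp1F1_real_scaled_le)
    then have "ln (hyp1F1_real a c (c * r)) \<le> ln ((1 - r) powr (- a))"
      by (metis ln_le_cancel_iff order_less_le_trans zero_less_one)
    then show ?case using assms elim by (intro divide_right_mono) auto
  qed
  show "((\<lambda>c. ln ((1 - r) powr (- a)) / c) \<longlongrightarrow> 0) at_top"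
    by (rule tendsto_divide_0[OF tendsto_const filterlim_at_top_imp_at_infinity[OF filterlim_ident]])
qed simp

lemma hyp1F1_scaled_log:
  fixes a c :: real and \<Omega> :: "complex set" and J :: "real set"
  assumes "0 < a" "a \<le> c" "convex \<Omega>" "connected J" "J \<subseteq> {0..}" "of_real ` J \<subseteq> \<Omega>"
    and nz: "\<And>w. w \<in> \<Omega> \<Longrightarrow> hyp1F1 a c (of_real c * w) \<noteq> 0"
  obtains f where "f holomorphic_on \<Omega>"
    "\<And>w. w \<in> \<Omega> \<Longrightarrow> Re (f w) \<le> norm w"
    "\<And>x. 0 \<le> x \<Longrightarrow> of_real x \<in> \<Omega> \<Longrightarrow>
      Re (f (of_real x)) = ln (hyp1F1_real a c (c * x)) / c"
    "\<And>r. r \<in> J \<Longrightarrow> f (of_real r) = of_real (ln (hyp1F1_real a c (c * r)) / c)"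
proof -
  have "0 < c" using assms by simp
  define F where "F w = hyp1F1 a c (of_real c * w)" for w
  have holF: "F holomorphic_on \<Omega>"
    unfolding F_def using assms(1,2) by (intro holomorphic_intros)
  have FR: "F (of_real x) = of_real (hyp1F1_real a c (c * x))" for x
    unfolding F_def using hyp1F1_of_real[OF assms(1,2), of "c * x"] by simp
  have R_pos: "0 < hyp1F1_real a c (c * x)" if "0 \<le> x" for x
    using hyp1F1_real_ge_1[OF assms(1,2), of "c * x"] \<open>0 < c\<close> that by simp
  obtain G where holG: "G holomorphic_on \<Omega>" and G: "\<And>w. w \<in> \<Omega> \<Longrightarrow> F w = exp (G w)"
    and GJ: "\<And>r. r \<in> J \<Longrightarrow> G (of_real r) = of_real (ln (hyp1F1_real a c (c * r)))"
    using holomorphic_log_extending_ln[OF holF \<open>convex \<Omega>\<close> _ \<open>connected J\<close> assms(6) FR]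
      nz R_pos \<open>J \<subseteq> {0..}\<close> unfolding F_def by blast
  have ReG: "exp (Re (G w)) = norm (F w)" if "w \<in> \<Omega>" for w
    using G[OF that] by simp
  show thesis
  proof (rule that[of "\<lambda>w. G w / of_real c"])
    show "(\<lambda>w. G w / of_real c) holomorphic_on \<Omega>"
      using \<open>0 < c\<close> by (intro holomorphic_intros holG) auto
    show "Re (G w / of_real c) \<le> norm w" if "w \<in> \<Omega>" for w
    proof -
      have "exp (Re (G w)) \<le> exp (c * norm w)"
        unfolding ReG[OF that] F_def
        using norm_hyp1F1_le[OF assms(1,2)] hyp1F1_real_le_exp[OF assms(1,2)] \<open>0 < c\<close>
        by (metis norm_ge_zero norm_mult norm_of_real abs_of_pos order_trans)
      then show ?thesis using \<open>0 < c\<close> by (simp add: field_simps)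
    qed
    show "Re (G (of_real x) / of_real c) = ln (hyp1F1_real a c (c * x)) / c"
      if "0 \<le> x" "of_real x \<in> \<Omega>" for x
    proof -
      have "exp (Re (G (of_real x))) = hyp1F1_real a c (c * x)"
        using ReG[OF that(2)] FR R_pos[OF that(1)] by simp
      then show ?thesis by (metis Re_divide_of_real ln_exp)
    qed
    show "G (of_real r) / of_real c = of_real (ln (hyp1F1_real a c (c * r)) / c)"
      if "r \<in> J" for r
      using GJ[OF that] by simp
  qed
qed

lemma hyp1F1_zero_free_imp_no_exp_growth:
  fixes a \<epsilon> p \<delta> :: real and cs :: "nat \<Rightarrow> real"
  assumes "0 < a" "0 < \<epsilon>" "\<epsilon> \<le> 1" "0 \<le> p" "\<bar>p - 1\<bar> < \<epsilon>" "0 < \<delta>"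
    and cs_lim: "filterlim cs at_top sequentially" and "\<And>n. a \<le> cs n"
    and nz: "\<And>n w. w \<in> ball 1 \<epsilon> \<Longrightarrow> hyp1F1 a (cs n) (of_real (cs n) * w) \<noteq> 0"
  shows "\<not> (\<forall>n. \<delta> * cs n \<le> ln (hyp1F1_real a (cs n) (cs n * p)))"
proof -
  define \<Omega> where "\<Omega> = ball (1::complex) \<epsilon>"
  define J where "J = {1 - \<epsilon> / 2 .. 1 - \<epsilon> / 4}"
  define R where "R c x = hyp1F1_real a c (c * x)" for c x
  have dist_1: "dist 1 (complex_of_real x) = \<bar>1 - x\<bar>" for x
    by (metis dist_complex_def dist_real_def norm_of_real of_real_1 of_real_diff)
  have J: "J \<subseteq> {0..<1}" "of_real ` J \<subseteq> \<Omega>" "of_real (1 - \<epsilon> / 2) \<in> \<Omega>"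
    and p: "of_real p \<in> \<Omega>"
    using assms by (auto simp: J_def \<Omega>_def dist_1)
  have "\<exists>f. f holomorphic_on \<Omega> \<and> (\<forall>w\<in>\<Omega>. Re (f w) \<le> norm w)
      \<and> Re (f (of_real p)) = ln (R (cs n) p) / cs n
      \<and> (\<forall>r\<in>J. f (of_real r) = of_real (ln (R (cs n) r) / cs n))" for n
  proof -
    have "convex \<Omega>" "connected J" "J \<subseteq> {0..}"
      using assms by (auto simp: \<Omega>_def J_def)
    from hyp1F1_scaled_log[OF \<open>0 < a\<close> \<open>a \<le> cs n\<close> this J(2) nz[folded \<Omega>_def]]
    obtain f where "f holomorphic_on \<Omega>" "\<And>w. w \<in> \<Omega> \<Longrightarrow> Re (f w) \<le> norm w"
      "\<And>x. 0 \<le> x \<Longrightarrow> of_real x \<in> \<Omega> \<Longrightarrow> Re (f (of_real x)) = ln (R (cs n) x) / cs n"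
      "\<And>r. r \<in> J \<Longrightarrow> f (of_real r) = of_real (ln (R (cs n) r) / cs n)"
      unfolding R_def by blast
    with p \<open>0 \<le> p\<close> show ?thesis by blast
  qed
  then obtain f where holf: "\<And>n. f n holomorphic_on \<Omega>"
    and Re_f: "\<And>n w. w \<in> \<Omega> \<Longrightarrow> Re (f n w) \<le> norm w"
    and f_p: "\<And>n. Re (f n (of_real p)) = ln (R (cs n) p) / cs n"
    and f_J: "\<And>n r. r \<in> J \<Longrightarrow> f n (of_real r) = of_real (ln (R (cs n) r) / cs n)"
    by metis
  have "\<not> (\<forall>n. \<delta> \<le> Re (f n (of_real p)))"
  proof (rule Re_bounded_holomorphic_family_not_uniformly_positive
      [of \<Omega> f "1 + \<epsilon>" "of_real ` J" "of_real (1 - \<epsilon> / 2)"])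
    show "Re (f n w) \<le> 1 + \<epsilon>" if "w \<in> \<Omega>" for n w
      using Re_f[OF that, of n] norm_triangle_sub[of w 1] that
      by (simp add: \<Omega>_def dist_norm norm_minus_commute)
    have "(1 - \<epsilon> / 2) islimpt J" using assms by (simp add: J_def)
    then show "complex_of_real (1 - \<epsilon> / 2) islimpt of_real ` J"
      by (rule islimpt_isCont_image) (auto simp: eventually_at_filter complex_eq_iff)
    show "(\<lambda>n. f n w) \<longlonglongrightarrow> 0" if "w \<in> of_real ` J" for w
    proof -
      obtain r where r: "r \<in> J" "w = of_real r" using \<open>w \<in> of_real ` J\<close> by blast
      have "((\<lambda>c. ln (R c r) / c) \<longlongrightarrow> 0) at_top"
        unfolding R_def using J r assms by (intro hyp1F1_real_scaled_subexponential) auto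
      then have "(\<lambda>n. ln (R (cs n) r) / cs n) \<longlonglongrightarrow> 0"
        by (rule filterlim_compose[OF _ cs_lim])
      then have "(\<lambda>n. complex_of_real (ln (R (cs n) r) / cs n)) \<longlonglongrightarrow> of_real 0"
        by (rule tendsto_of_real)
      then show ?thesis using f_J[OF r(1)] r(2) by simp
    qed
    show "open \<Omega>" "connected \<Omega>" by (simp_all add: \<Omega>_def)
  qed (fact holf J p \<open>0 < \<delta>\<close>)+
  moreover have "0 < cs n" for n using assms(1) \<open>a \<le> cs n\<close> by linarith
  ultimately show ?thesis
    using f_p by (auto simp: R_def le_divide_eq)
qed

lemma eventually_hyp1F1_zero_near:
  fixes a \<epsilon> :: real
  assumes "0 < a" "0 < \<epsilon>" "\<epsilon> \<le> 1"
  shows "\<forall>\<^sub>F c in at_top. \<exists>z. hyp1F1 a c z = 0 \<and> dist (z / of_real c) 1 < \<epsilon>"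
proof (rule ccontr)
  define p where "p = 1 + \<epsilon> / 2"
  obtain \<delta> where "0 < \<delta>"
    and growth: "\<forall>\<^sub>F c in at_top. exp (\<delta> * c) \<le> hyp1F1_real a c (c * p)"
    using hyp1F1_real_scaled_exp_growth[OF \<open>0 < a\<close>, of p] assms by (auto simp: p_def)
  let ?zero_near = "\<lambda>c. \<exists>z. hyp1F1 a c z = 0 \<and> dist (z / of_real c) 1 < \<epsilon>"
  assume "\<not> eventually ?zero_near at_top"
  then have "\<exists>\<^sub>F c in at_top. \<not> ?zero_near c"
    by (simp add: frequently_def)
  with eventually_conj[OF eventually_ge_at_top[of a] growth]
  have "\<exists>\<^sub>F c in at_top. (a \<le> c \<and> exp (\<delta> * c) \<le> hyp1F1_real a c (c * p)) \<and> \<not> ?zero_near c"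
    by (intro frequently_eventually_conj)
  then obtain cs where cs_lim: "filterlim cs at_top sequentially"
    and cs: "\<And>n. a \<le> cs n" "\<And>n. exp (\<delta> * cs n) \<le> hyp1F1_real a (cs n) (cs n * p)"
      "\<And>n. \<not> ?zero_near (cs n)"
    by (rule frequently_at_top_imp_sequence) blast
  have "hyp1F1 a (cs n) (of_real (cs n) * w) \<noteq> 0" if "w \<in> ball 1 \<epsilon>" for n w
  proof
    assume "hyp1F1 a (cs n) (of_real (cs n) * w) = 0"
    moreover have "dist (of_real (cs n) * w / of_real (cs n)) 1 < \<epsilon>"
      using that cs(1)[of n] assms by (simp add: dist_commute)
    ultimately show False using cs(3)[of n] by blast
  qed
  then have "\<not> (\<forall>n. \<delta> * cs n \<le> ln (hyp1F1_real a (cs n) (cs n * p)))"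
    using assms \<open>0 < \<delta>\<close> cs(1) cs_lim
    by (intro hyp1F1_zero_free_imp_no_exp_growth) (auto simp: p_def)
  moreover have "\<delta> * cs n \<le> ln (hyp1F1_real a (cs n) (cs n * p))" for n
    using cs(2)[of n] by (metis exp_gt_zero ln_exp ln_le_cancel_iff order_less_le_trans)
  ultimately show False by blast
qed

theorem theorem6p1:
  fixes a :: real
  assumes "a > 0"
  shows "\<exists>zs :: real \<Rightarrow> complex.
           (\<forall>\<^sub>F c in at_top. hyp1F1 a c (zs c) = 0) \<and>
           ((\<lambda>c. zs c / complex_of_real c) \<longlongrightarrow> 1) at_top"
proof -
  have "\<forall>\<^sub>F c in at_top. \<exists>z. hyp1F1 a c z = 0 \<and> dist (z / of_real c) 1 < \<epsilon>" if "0 < \<epsilon>" for \<epsilon>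
  proof -
    have "\<forall>\<^sub>F c in at_top. \<exists>z. hyp1F1 a c z = 0 \<and> dist (z / of_real c) 1 < min \<epsilon> 1"
      using assms that by (intro eventually_hyp1F1_zero_near) auto
    then show ?thesis by eventually_elim auto
  qed
  then show ?thesis by (rule tendsto_choice_at_top)
qed

end
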